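(* Let $\mathcal{S}$ be a temporal feedback graph on $T$ rounds with maximal orders $C_1,\dots,C_N$, and let $\boldsymbol\mu^*$ be an optimal solution to the upper bound dual program (maximize $\sum_t\mu_t$ s.t. $\sum_{t\in C_c}\mu_t^2\le1$ for all $c$, $\mu\ge0$). Then there exists an optimal solution $\boldsymbol\lambda^*$ to the upper bound program (minimize $\sum_{c}\sqrt{\sum_{t\in C_c}\lambda_{c,t}^2}$ s.t. $\sum_c\lambda_{c,t}=1$ for all $t$, $\lambda_{c,t}=0$ if $t\notin C_c$, $\lambda\ge0$) such that: for every $c\in[N]$ with $\sum_{t\in C_c}(\mu^*_t)^2<1$ we have $\lambda^*_{c,t}=0$ for all $t\in[T]$, and for every $c\in[N]$ with $\sum_{t\in C_c}(\mu^*_t)^2=1$ there is a constant $\rho_c$ with $\lambda^*_{c,t}=\rho_c\mu^*_t$ for all $t$ (in $C_c$).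
   Context: A temporal feedback graph $\mathcal{S}$ is a collection of subsets $S_t\subseteq[T]\setminus\{t\}$, $t\in[T]$. A sequence of rounds $t_1,\dots,t_w$ is an order if $t_u\in S_{t_v}$ for all $u<v$; it is maximal if no super-sequence of it is an order. *)

theory Defs
  imports Complex_Main "HOL-Library.Sublist"
begin

definition temporal_feedback_graph :: "nat \<Rightarrow> (nat \<Rightarrow> nat set) \<Rightarrow> bool" where
  "temporal_feedback_graph T S \<longleftrightarrow> (\<forall>t\<in>{1..T}. S t \<subseteq> {1..T} - {t})"

definition is_order :: "nat \<Rightarrow> (nat \<Rightarrow> nat set) \<Rightarrow> nat list \<Rightarrow> bool" where
  "is_order T S xs \<longleftrightarrow> set xs \<subseteq> {1..T} \<and>
     (\<forall>u v. u < v \<and> v < length xs \<longrightarrow> xs ! u \<in> S (xs ! v))"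

definition is_maximal_order :: "nat \<Rightarrow> (nat \<Rightarrow> nat set) \<Rightarrow> nat list \<Rightarrow> bool" where
  "is_maximal_order T S xs \<longleftrightarrow> is_order T S xs \<and>
     \<not> (\<exists>ys. is_order T S ys \<and> subseq xs ys \<and> ys \<noteq> xs)"

definition maximal_orders :: "nat \<Rightarrow> (nat \<Rightarrow> nat set) \<Rightarrow> nat list set" where
  "maximal_orders T S = {xs. is_maximal_order T S xs}"

definition dual_feasible :: "nat \<Rightarrow> (nat \<Rightarrow> nat set) \<Rightarrow> (nat \<Rightarrow> real) \<Rightarrow> bool" where
  "dual_feasible T S \<mu> \<longleftrightarrow> (\<forall>t\<in>{1..T}. \<mu> t \<ge> 0) \<and>
     (\<forall>c\<in>maximal_orders T S. (\<Sum>t\<in>set c. (\<mu> t)\<^sup>2) \<le> 1)"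

definition dual_optimal :: "nat \<Rightarrow> (nat \<Rightarrow> nat set) \<Rightarrow> (nat \<Rightarrow> real) \<Rightarrow> bool" where
  "dual_optimal T S \<mu> \<longleftrightarrow> dual_feasible T S \<mu> \<and>
     (\<forall>\<nu>. dual_feasible T S \<nu> \<longrightarrow> (\<Sum>t\<in>{1..T}. \<nu> t) \<le> (\<Sum>t\<in>{1..T}. \<mu> t))"

definition primal_feasible :: "nat \<Rightarrow> (nat \<Rightarrow> nat set) \<Rightarrow> (nat list \<Rightarrow> nat \<Rightarrow> real) \<Rightarrow> bool" where
  "primal_feasible T S lam \<longleftrightarrow>
     (\<forall>t\<in>{1..T}. (\<Sum>c\<in>maximal_orders T S. lam c t) = 1) \<and>
     (\<forall>c\<in>maximal_orders T S. \<forall>t\<in>{1..T}. t \<notin> set c \<longrightarrow> lam c t = 0) \<and>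
     (\<forall>c\<in>maximal_orders T S. \<forall>t\<in>{1..T}. lam c t \<ge> 0)"

definition primal_objective :: "nat \<Rightarrow> (nat \<Rightarrow> nat set) \<Rightarrow> (nat list \<Rightarrow> nat \<Rightarrow> real) \<Rightarrow> real" where
  "primal_objective T S lam = (\<Sum>c\<in>maximal_orders T S. sqrt (\<Sum>t\<in>set c. (lam c t)\<^sup>2))"

definition primal_optimal :: "nat \<Rightarrow> (nat \<Rightarrow> nat set) \<Rightarrow> (nat list \<Rightarrow> nat \<Rightarrow> real) \<Rightarrow> bool" where
  "primal_optimal T S lam \<longleftrightarrow> primal_feasible T S lam \<and>
     (\<forall>lam'. primal_feasible T S lam' \<longrightarrow> primal_objective T S lam \<le> primal_objective T S lam')"

end

theory Submission
  imports Defs "HOL-Analysis.L2_Norm"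
begin

text \<open>Call a maximal order \<open>c\<close> tight if \<open>\<Sum>t\<in>c. \<mu> t\<^sup>2 = 1\<close>. By Farkas' lemma, either the
  all-ones vector is a nonnegative combination, with coefficients \<open>\<rho> c\<close>, of the restrictions of
  \<open>\<mu>\<close> to the tight orders, or some \<open>y\<close> has \<open>\<Sum>t\<in>c. y t * \<mu> t \<le> 0\<close> for every tight \<open>c\<close> and
  \<open>\<Sum>t. y t > 0\<close>. In the second case \<open>d = y - \<delta> \<mu>\<close> (small \<open>\<delta> > 0\<close>) strictly decreases every
  tight constraint and increases the objective, so \<open>\<bar>\<mu> + \<epsilon> d\<bar>\<close> is a better dual feasible point
  for small \<open>\<epsilon> > 0\<close>, contradicting optimality. In the first case \<open>\<lambda> c t = \<rho> c * \<mu> t\<close> on the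
  tight orders (and \<open>0\<close> elsewhere) is primal feasible with value \<open>\<Sum>c. \<rho> c = \<Sum>t. \<mu> t\<close>, hence
  optimal by weak duality, which is Cauchy--Schwarz on each order.\<close>

section \<open>Farkas' lemma for finitely many vectors\<close>

definition dot_on :: "'a set \<Rightarrow> ('a \<Rightarrow> real) \<Rightarrow> ('a \<Rightarrow> real) \<Rightarrow> real" where
  "dot_on I x y = (\<Sum>t\<in>I. x t * y t)"

definition nonneg_combination_on ::
    "'a set \<Rightarrow> ('b \<Rightarrow> 'a \<Rightarrow> real) \<Rightarrow> 'b set \<Rightarrow> ('a \<Rightarrow> real) \<Rightarrow> bool" where
  "nonneg_combination_on I a K b \<longleftrightarrow>
     (\<exists>\<rho>. (\<forall>k\<in>K. 0 \<le> \<rho> k) \<and> (\<forall>t\<in>I. b t = (\<Sum>k\<in>K. \<rho> k * a k t)))"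

lemma dot_on_commute: "dot_on I x y = dot_on I y x"
  unfolding dot_on_def by (simp add: mult.commute)

lemma dot_on_diff_scaled_left:
  "dot_on I (\<lambda>t. x t - c * y t) v = dot_on I x v - c * dot_on I y v"
  unfolding dot_on_def by (simp add: sum_subtractf sum_distrib_left algebra_simps)

lemma dot_on_diff_scaled_right:
  "dot_on I v (\<lambda>t. x t - c * y t) = dot_on I v x - c * dot_on I v y"
  using dot_on_diff_scaled_left by (metis dot_on_commute)

lemma dot_on_self_pos:
  assumes "finite I" "t \<in> I" "x t \<noteq> 0"
  shows "0 < dot_on I x x"
  unfolding dot_on_def
  by (rule sum_pos2[OF assms(1,2)]) (use assms(3) in \<open>auto simp: zero_less_mult_iff\<close>)

lemma dot_on_restrict:
  assumes "A \<subseteq> I" "finite I"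
  shows "dot_on I v (\<lambda>t. if t \<in> A then x t else 0) = (\<Sum>t\<in>A. v t * x t)"
  unfolding dot_on_def using assms by (intro sum.mono_neutral_cong_right) auto

lemma nonneg_combination_on_insert:
  assumes "nonneg_combination_on I a K b" "finite K" "k0 \<notin> K"
  shows "nonneg_combination_on I a (insert k0 K) b"
proof -
  obtain \<rho> where \<rho>: "\<forall>k\<in>K. 0 \<le> \<rho> k" "\<forall>t\<in>I. b t = (\<Sum>k\<in>K. \<rho> k * a k t)"
    using assms(1) unfolding nonneg_combination_on_def by blast
  have "(\<Sum>k\<in>insert k0 K. (\<rho>(k0 := 0)) k * a k t) = (\<Sum>k\<in>K. \<rho> k * a k t)" for t
    using assms(2,3) by (auto intro: sum.cong)
  then show ?thesis
    unfolding nonneg_combination_on_def using \<rho> by (intro exI[of _ "\<rho>(k0 := 0)"]) simp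
qed

definition proj_along :: "'a set \<Rightarrow> ('a \<Rightarrow> real) \<Rightarrow> ('a \<Rightarrow> real) \<Rightarrow> ('a \<Rightarrow> real) \<Rightarrow> 'a \<Rightarrow> real" where
  "proj_along I y u v = (\<lambda>t. v t - dot_on I y v / dot_on I y u * u t)"

lemma proj_along_self: "dot_on I y u \<noteq> 0 \<Longrightarrow> proj_along I y u u = (\<lambda>_. 0)"
  unfolding proj_along_def by simp

lemma dot_on_proj_along_adjoint:
  "dot_on I (proj_along I u y z) v = dot_on I z (proj_along I y u v)"
proof -
  have "dot_on I u z = dot_on I z u" "dot_on I u y = dot_on I y u"
    by (rule dot_on_commute)+
  then show ?thesis
    unfolding proj_along_def dot_on_diff_scaled_left dot_on_diff_scaled_right by simp
qed

lemma nonneg_combination_on_unproject: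
  assumes "finite K" "k0 \<notin> K"
    and y_pos: "0 < dot_on I y (a k0)" and y_nonpos: "\<forall>k\<in>K. dot_on I y (a k) \<le> 0"
    and y_b: "0 \<le> dot_on I y b"
    and "nonneg_combination_on I (\<lambda>k. proj_along I y (a k0) (a k)) K (proj_along I y (a k0) b)"
  shows "nonneg_combination_on I a (insert k0 K) b"
proof -
  define \<alpha> where "\<alpha> = dot_on I y (a k0)"
  obtain \<rho> where \<rho>_nonneg: "\<forall>k\<in>K. 0 \<le> \<rho> k"
    and proj_b: "\<forall>t\<in>I. b t - dot_on I y b / \<alpha> * a k0 t
                   = (\<Sum>k\<in>K. \<rho> k * (a k t - dot_on I y (a k) / \<alpha> * a k0 t))"
    using assms(6) unfolding nonneg_combination_on_def proj_along_def \<alpha>_def by blast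
  define \<rho>0 where "\<rho>0 = (dot_on I y b - (\<Sum>k\<in>K. \<rho> k * dot_on I y (a k))) / \<alpha>"
  have "(\<Sum>k\<in>K. \<rho> k * dot_on I y (a k)) \<le> 0"
    using \<rho>_nonneg y_nonpos by (intro sum_nonpos) (simp add: mult_nonneg_nonpos)
  then have "0 \<le> \<rho>0" unfolding \<rho>0_def \<alpha>_def using y_pos y_b by simp
  have "b t = (\<Sum>k\<in>K. \<rho> k * a k t) + \<rho>0 * a k0 t" if "t \<in> I" for t
    using proj_b that unfolding \<rho>0_def
    by (simp add: algebra_simps sum_subtractf sum_distrib_left sum_distrib_right
        sum_divide_distrib diff_divide_distrib)
  moreover have "(\<Sum>k\<in>insert k0 K. (\<rho>(k0 := \<rho>0)) k * a k t)
      = (\<Sum>k\<in>K. \<rho> k * a k t) + \<rho>0 * a k0 t" for t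
    using assms(1,2) by (auto intro: sum.cong)
  ultimately show ?thesis
    unfolding nonneg_combination_on_def using \<rho>_nonneg \<open>0 \<le> \<rho>0\<close> assms(2)
    by (intro exI[of _ "\<rho>(k0 := \<rho>0)"]) auto
qed

text \<open>Induction on \<open>K\<close>: if \<open>y\<close> separates \<open>b\<close> from the cone of \<open>a k\<close>, \<open>k \<in> K\<close>, but not from
  \<open>a k0\<close>, project everything along \<open>a k0\<close> onto the hyperplane orthogonal to \<open>y\<close> and apply the
  induction hypothesis there; both alternatives lift back.\<close>

lemma farkas_alternative:
  assumes "finite K" "finite I"
  shows "nonneg_combination_on I a K b \<or>
    (\<exists>y. (\<forall>k\<in>K. dot_on I y (a k) \<le> 0) \<and> 0 < dot_on I y b)"
  using assms(1)
proof (induction K arbitrary: a b rule: finite_induct)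
  case empty
  show ?case
  proof (cases "\<forall>t\<in>I. b t = 0")
    case True
    then show ?thesis unfolding nonneg_combination_on_def by simp
  next
    case False
    then show ?thesis using dot_on_self_pos[OF assms(2)] by blast
  qed
next
  case (insert k0 K)
  consider (cone) "nonneg_combination_on I a K b"
    | (separated) y where "\<forall>k\<in>K. dot_on I y (a k) \<le> 0" "0 < dot_on I y b"
    using insert.IH[of a b] by blast
  then show ?case
  proof cases
    case cone
    show ?thesis using nonneg_combination_on_insert[OF cone insert.hyps] ..
  next
    case (separated y)
    show ?thesis
    proof (cases "dot_on I y (a k0) \<le> 0")
      case True
      then show ?thesis using separated by auto
    next
      case False
      let ?P = "proj_along I y (a k0)"
      consider (cone') "nonneg_combination_on I (\<lambda>k. ?P (a k)) K (?P b)"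
        | (separated') z where "\<forall>k\<in>K. dot_on I z (?P (a k)) \<le> 0" "0 < dot_on I z (?P b)"
        using insert.IH[of "\<lambda>k. ?P (a k)" "?P b"] by blast
      then show ?thesis
      proof cases
        case cone'
        have "nonneg_combination_on I a (insert k0 K) b"
          using False separated(2)
          by (intro nonneg_combination_on_unproject[OF insert.hyps _ separated(1) _ cone']) auto
        then show ?thesis ..
      next
        case (separated' z)
        define w where "w = proj_along I (a k0) y z"
        have "dot_on I w v = dot_on I z (?P v)" for v
          unfolding w_def by (rule dot_on_proj_along_adjoint)
        moreover have "?P (a k0) = (\<lambda>_. 0)"
          using False by (simp add: proj_along_self)
        ultimately show ?thesis
          using separated' by (intro disjI2 exI[of _ w]) (simp add: dot_on_def)
      qed
    qed
  qed
qed

section \<open>Maximal orders and weak duality\<close>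

lemma is_order_distinct:
  assumes G: "temporal_feedback_graph T S" and O: "is_order T S xs"
  shows "distinct xs"
proof -
  have "xs ! i \<noteq> xs ! j" if "i < j" "j < length xs" for i j
  proof -
    have "xs ! j \<in> {1..T}" using O that unfolding is_order_def by (meson nth_mem subsetD)
    moreover have "xs ! i \<in> S (xs ! j)" using O that unfolding is_order_def by blast
    ultimately show ?thesis using G unfolding temporal_feedback_graph_def by blast
  qed
  then show ?thesis unfolding distinct_conv_nth by (metis linorder_neqE_nat)
qed

lemma set_maximal_order_subset: "c \<in> maximal_orders T S \<Longrightarrow> set c \<subseteq> {1..T}"
  unfolding maximal_orders_def is_maximal_order_def is_order_def by auto

lemma finite_maximal_orders:
  assumes G: "temporal_feedback_graph T S"
  shows "finite (maximal_orders T S)"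
proof -
  have "maximal_orders T S \<subseteq> {xs. set xs \<subseteq> {1..T} \<and> length xs \<le> T}"
  proof
    fix xs assume xs: "xs \<in> maximal_orders T S"
    then have "is_order T S xs" unfolding maximal_orders_def is_maximal_order_def by auto
    then have "length xs = card (set xs)" using is_order_distinct[OF G] by (simp add: distinct_card)
    also have "\<dots> \<le> T" using card_mono[OF _ set_maximal_order_subset[OF xs]] by simp
    finally show "xs \<in> {xs. set xs \<subseteq> {1..T} \<and> length xs \<le> T}"
      using set_maximal_order_subset[OF xs] by simp
  qed
  then show ?thesis by (rule finite_subset) (rule finite_lists_length_le, simp)
qed

lemma weak_duality:
  assumes D: "dual_feasible T S \<mu>" and P: "primal_feasible T S lam"
  shows "(\<Sum>t\<in>{1..T}. \<mu> t) \<le> primal_objective T S lam"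
proof -
  let ?M = "maximal_orders T S"
  have "(\<Sum>t\<in>{1..T}. \<mu> t) = (\<Sum>t\<in>{1..T}. \<mu> t * (\<Sum>c\<in>?M. lam c t))"
    using P unfolding primal_feasible_def by simp
  also have "\<dots> = (\<Sum>c\<in>?M. \<Sum>t\<in>{1..T}. \<mu> t * lam c t)"
    by (simp add: sum_distrib_left) (rule sum.swap)
  also have "\<dots> \<le> (\<Sum>c\<in>?M. sqrt (\<Sum>t\<in>set c. (lam c t)\<^sup>2))"
  proof (rule sum_mono)
    fix c assume c: "c \<in> ?M"
    have "(\<Sum>t\<in>{1..T}. \<mu> t * lam c t) = (\<Sum>t\<in>set c. \<mu> t * lam c t)"
      using c P set_maximal_order_subset[OF c] unfolding primal_feasible_def
      by (intro sum.mono_neutral_right) auto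
    also have "\<dots> \<le> (\<Sum>t\<in>set c. \<bar>\<mu> t\<bar> * \<bar>lam c t\<bar>)"
      by (rule sum_mono) (metis abs_mult abs_ge_self)
    also have "\<dots> \<le> L2_set \<mu> (set c) * L2_set (lam c) (set c)"
      by (rule L2_set_mult_ineq)
    also have "\<dots> \<le> L2_set (lam c) (set c)"
      using D c unfolding dual_feasible_def L2_set_def
      by (intro mult_left_le_one_le) (auto simp: sum_nonneg)
    finally show "(\<Sum>t\<in>{1..T}. \<mu> t * lam c t) \<le> sqrt (\<Sum>t\<in>set c. (lam c t)\<^sup>2)"
      by (simp add: L2_set_def)
  qed
  finally show ?thesis unfolding primal_objective_def .
qed

section \<open>Tight orders of an optimal dual solution\<close>

lemma eventually_perturbed_sum_squares_le_one:
  fixes \<mu> d :: "'a \<Rightarrow> real"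
  assumes le: "(\<Sum>t\<in>C. (\<mu> t)\<^sup>2) \<le> 1"
    and tight: "(\<Sum>t\<in>C. (\<mu> t)\<^sup>2) = 1 \<Longrightarrow> (\<Sum>t\<in>C. d t * \<mu> t) < 0"
  shows "\<forall>\<^sub>F \<epsilon> in at_right 0. (\<Sum>t\<in>C. (\<mu> t + \<epsilon> * d t)\<^sup>2) \<le> 1"
proof -
  define q where "q = (\<Sum>t\<in>C. (\<mu> t)\<^sup>2)"
  define X where "X = (\<Sum>t\<in>C. d t * \<mu> t)"
  define D where "D = (\<Sum>t\<in>C. (d t)\<^sup>2)"
  have expand: "(\<Sum>t\<in>C. (\<mu> t + \<epsilon> * d t)\<^sup>2) = q + \<epsilon> * (2 * X + \<epsilon> * D)" for \<epsilon>
    unfolding q_def X_def D_def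
    by (simp add: power2_eq_square sum.distrib sum_distrib_left algebra_simps)
  have slope: "((\<lambda>\<epsilon>. 2 * X + \<epsilon> * D) \<longlongrightarrow> 2 * X) (at_right 0)"
    by (auto intro!: tendsto_eq_intros)
  show ?thesis
  proof (cases "q = 1")
    case True
    then have "2 * X < 0" using tight unfolding q_def X_def by simp
    then have "\<forall>\<^sub>F \<epsilon> in at_right 0. 2 * X + \<epsilon> * D < 0"
      using order_tendstoD(2)[OF slope] by blast
    then show ?thesis
      using eventually_at_right_less[of 0]
      by eventually_elim (simp add: expand True mult_pos_neg less_imp_le)
  next
    case False
    then have "q < 1" using le unfolding q_def by simp
    moreover have "((\<lambda>\<epsilon>. q + \<epsilon> * (2 * X + \<epsilon> * D)) \<longlongrightarrow> q) (at_right 0)"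
      by (auto intro!: tendsto_eq_intros)
    ultimately have "\<forall>\<^sub>F \<epsilon> in at_right 0. q + \<epsilon> * (2 * X + \<epsilon> * D) < 1"
      using order_tendstoD(2) by blast
    then show ?thesis by eventually_elim (simp add: expand)
  qed
qed

definition tight_orders :: "nat \<Rightarrow> (nat \<Rightarrow> nat set) \<Rightarrow> (nat \<Rightarrow> real) \<Rightarrow> nat list set" where
  "tight_orders T S \<mu> = {c \<in> maximal_orders T S. (\<Sum>t\<in>set c. (\<mu> t)\<^sup>2) = 1}"

lemma dual_optimal_no_ascent_direction:
  assumes G: "temporal_feedback_graph T S" and opt: "dual_optimal T S \<mu>"
    and descent: "\<And>c. c \<in> tight_orders T S \<mu> \<Longrightarrow> (\<Sum>t\<in>set c. d t * \<mu> t) < 0"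
  shows "(\<Sum>t\<in>{1..T}. d t) \<le> 0"
proof (rule ccontr)
  assume ascent: "\<not> (\<Sum>t\<in>{1..T}. d t) \<le> 0"
  have feasible: "dual_feasible T S \<mu>" using opt unfolding dual_optimal_def by simp
  have "\<forall>c\<in>maximal_orders T S. \<forall>\<^sub>F \<epsilon> in at_right 0. (\<Sum>t\<in>set c. (\<mu> t + \<epsilon> * d t)\<^sup>2) \<le> 1"
    using feasible descent unfolding dual_feasible_def tight_orders_def
    by (auto intro!: eventually_perturbed_sum_squares_le_one)
  then have "\<forall>\<^sub>F \<epsilon> in at_right 0. \<forall>c\<in>maximal_orders T S. (\<Sum>t\<in>set c. (\<mu> t + \<epsilon> * d t)\<^sup>2) \<le> 1"
    by (rule eventually_ball_finite[OF finite_maximal_orders[OF G]])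
  moreover note eventually_at_right_less[of "0::real"]
  ultimately obtain \<epsilon> :: real where \<epsilon>: "0 < \<epsilon>"
    and fits: "\<forall>c\<in>maximal_orders T S. (\<Sum>t\<in>set c. (\<mu> t + \<epsilon> * d t)\<^sup>2) \<le> 1"
    using eventually_happens'[OF trivial_limit_at_right_real] eventually_conj by blast
  define \<nu> where "\<nu> = (\<lambda>t. \<bar>\<mu> t + \<epsilon> * d t\<bar>)"
  have "dual_feasible T S \<nu>"
    using fits unfolding dual_feasible_def \<nu>_def by simp
  then have "(\<Sum>t\<in>{1..T}. \<nu> t) \<le> (\<Sum>t\<in>{1..T}. \<mu> t)"
    using opt unfolding dual_optimal_def by blast
  moreover have "(\<Sum>t\<in>{1..T}. \<mu> t) + \<epsilon> * (\<Sum>t\<in>{1..T}. d t) \<le> (\<Sum>t\<in>{1..T}. \<nu> t)"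
    unfolding \<nu>_def sum_distrib_left sum.distrib[symmetric] by (rule sum_mono) simp
  moreover have "0 < \<epsilon> * (\<Sum>t\<in>{1..T}. d t)" using \<epsilon> ascent by simp
  ultimately show False by linarith
qed

lemma dual_optimal_tight_cone:
  assumes G: "temporal_feedback_graph T S" and opt: "dual_optimal T S \<mu>"
  shows "nonneg_combination_on {1..T} (\<lambda>c t. if t \<in> set c then \<mu> t else 0)
           (tight_orders T S \<mu>) (\<lambda>_. 1)"
proof (rule ccontr)
  let ?I = "{1..T}" and ?K = "tight_orders T S \<mu>"
  let ?g = "\<lambda>c t. if t \<in> set c then \<mu> t else 0"
  have tight_dot: "dot_on ?I v (?g c) = (\<Sum>t\<in>set c. v t * \<mu> t)" if "c \<in> ?K" for c v
    using set_maximal_order_subset[of c T S] that unfolding tight_orders_def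
    by (intro dot_on_restrict) auto
  assume "\<not> ?thesis"
  then obtain y where y_tight: "\<forall>c\<in>?K. dot_on ?I y (?g c) \<le> 0"
    and y_ascent: "0 < dot_on ?I y (\<lambda>_. 1)"
    using farkas_alternative[of ?K ?I ?g "\<lambda>_. 1"] finite_maximal_orders[OF G]
    unfolding tight_orders_def by auto
  define m where "m = (\<Sum>t\<in>?I. \<mu> t)"
  have "0 \<le> m"
    using opt unfolding m_def dual_optimal_def dual_feasible_def by (auto intro!: sum_nonneg)
  define \<delta> where "\<delta> = dot_on ?I y (\<lambda>_. 1) / (2 * (m + 1))"
  have "0 < \<delta>" using y_ascent \<open>0 \<le> m\<close> unfolding \<delta>_def by simp
  have "\<delta> * m < dot_on ?I y (\<lambda>_. 1)"
    using y_ascent \<open>0 \<le> m\<close> unfolding \<delta>_def by (auto simp: field_simps intro!: add_nonneg_pos)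
  \<comment> \<open>Tilting \<open>y\<close> slightly towards \<open>-\<mu>\<close> makes every tight constraint strictly decrease.\<close>
  define d where "d = (\<lambda>t. y t - \<delta> * \<mu> t)"
  have "(\<Sum>t\<in>set c. d t * \<mu> t) < 0" if "c \<in> ?K" for c
  proof -
    have "(\<Sum>t\<in>set c. d t * \<mu> t) = dot_on ?I y (?g c) - \<delta> * (\<Sum>t\<in>set c. (\<mu> t)\<^sup>2)"
      unfolding d_def tight_dot[OF that]
      by (simp add: sum_subtractf sum_distrib_left power2_eq_square algebra_simps)
    then show ?thesis
      using y_tight that \<open>0 < \<delta>\<close> unfolding tight_orders_def by auto
  qed
  then have "(\<Sum>t\<in>?I. d t) \<le> 0"
    by (rule dual_optimal_no_ascent_direction[OF G opt])
  moreover have "(\<Sum>t\<in>?I. d t) = dot_on ?I y (\<lambda>_. 1) - \<delta> * m"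
    unfolding d_def m_def dot_on_def by (simp add: sum_subtractf sum_distrib_left)
  ultimately show False using \<open>\<delta> * m < dot_on ?I y (\<lambda>_. 1)\<close> by linarith
qed

lemma primal_optimal_from_tight_cone:
  assumes G: "temporal_feedback_graph T S" and feasible: "dual_feasible T S \<mu>"
    and \<rho>_nonneg: "\<forall>c\<in>tight_orders T S \<mu>. 0 \<le> \<rho> c"
    and cover: "\<forall>t\<in>{1..T}. 1 = (\<Sum>c\<in>tight_orders T S \<mu>. \<rho> c * (if t \<in> set c then \<mu> t else 0))"
  shows "primal_optimal T S (\<lambda>c t. if c \<in> tight_orders T S \<mu> \<and> t \<in> set c then \<rho> c * \<mu> t else 0)"
    (is "primal_optimal T S ?lam")
proof -
  let ?M = "maximal_orders T S" and ?K = "tight_orders T S \<mu>"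
  have "?K \<subseteq> ?M" unfolding tight_orders_def by auto
  have sum_tight: "(\<Sum>c\<in>?M. f c) = (\<Sum>c\<in>?K. f c)" if "\<And>c. c \<in> ?M - ?K \<Longrightarrow> f c = 0"
    for f :: "nat list \<Rightarrow> real"
    using finite_maximal_orders[OF G] \<open>?K \<subseteq> ?M\<close> that by (intro sum.mono_neutral_right) auto
  have "primal_feasible T S ?lam"
    unfolding primal_feasible_def
  proof (intro conjI ballI impI)
    fix t assume "t \<in> {1..T}"
    have "(\<Sum>c\<in>?M. ?lam c t) = (\<Sum>c\<in>?K. \<rho> c * (if t \<in> set c then \<mu> t else 0))"
      by (subst sum_tight) (auto intro: sum.cong)
    then show "(\<Sum>c\<in>?M. ?lam c t) = 1"
      using cover \<open>t \<in> {1..T}\<close> by simp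
  next
    fix c t assume "c \<in> ?M" "t \<in> {1..T}"
    then show "0 \<le> ?lam c t"
      using \<rho>_nonneg feasible unfolding dual_feasible_def by auto
  qed simp
  moreover have "primal_objective T S ?lam = (\<Sum>c\<in>?K. \<rho> c)"
  proof -
    have "sqrt (\<Sum>t\<in>set c. (?lam c t)\<^sup>2) = \<rho> c" if "c \<in> ?K" for c
    proof -
      have "(\<Sum>t\<in>set c. (?lam c t)\<^sup>2) = (\<rho> c)\<^sup>2 * (\<Sum>t\<in>set c. (\<mu> t)\<^sup>2)"
        using that by (simp add: power_mult_distrib sum_distrib_left)
      then show ?thesis using that \<rho>_nonneg unfolding tight_orders_def by simp
    qed
    then show ?thesis
      unfolding primal_objective_def by (subst sum_tight) (auto intro: sum.cong)
  qed
  moreover have "(\<Sum>t\<in>{1..T}. \<mu> t) = (\<Sum>c\<in>?K. \<rho> c)"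
  proof -
    have "(\<Sum>t\<in>{1..T}. \<mu> t)
        = (\<Sum>t\<in>{1..T}. \<mu> t * (\<Sum>c\<in>?K. \<rho> c * (if t \<in> set c then \<mu> t else 0)))"
      using cover by simp
    also have "\<dots> = (\<Sum>c\<in>?K. \<rho> c * dot_on {1..T} \<mu> (\<lambda>t. if t \<in> set c then \<mu> t else 0))"
      unfolding dot_on_def by (simp add: sum_distrib_left algebra_simps) (rule sum.swap)
    also have "\<dots> = (\<Sum>c\<in>?K. \<rho> c)"
    proof (rule sum.cong)
      fix c assume c: "c \<in> ?K"
      then have "dot_on {1..T} \<mu> (\<lambda>t. if t \<in> set c then \<mu> t else 0) = 1"
        using set_maximal_order_subset[of c T S] unfolding tight_orders_def
        by (subst dot_on_restrict) (auto simp: power2_eq_square)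
      then show "\<rho> c * dot_on {1..T} \<mu> (\<lambda>t. if t \<in> set c then \<mu> t else 0) = \<rho> c"
        by simp
    qed simp
    finally show ?thesis .
  qed
  ultimately show ?thesis
    unfolding primal_optimal_def using weak_duality[OF feasible] by auto
qed

theorem lemma3:
  fixes T :: nat and S :: "nat \<Rightarrow> nat set" and \<mu> :: "nat \<Rightarrow> real"
  assumes "temporal_feedback_graph T S"
    and "dual_optimal T S \<mu>"
  shows "\<exists>lam. primal_optimal T S lam \<and>
    (\<forall>c\<in>maximal_orders T S.
       ((\<Sum>t\<in>set c. (\<mu> t)\<^sup>2) < 1 \<longrightarrow> (\<forall>t\<in>{1..T}. lam c t = 0)) \<and>
       ((\<Sum>t\<in>set c. (\<mu> t)\<^sup>2) = 1 \<longrightarrow> (\<exists>\<rho>. \<forall>t\<in>set c. lam c t = \<rho> * \<mu> t)))"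
proof -
  obtain \<rho> where \<rho>_nonneg: "\<forall>c\<in>tight_orders T S \<mu>. 0 \<le> \<rho> c"
    and cover: "\<forall>t\<in>{1..T}. 1 = (\<Sum>c\<in>tight_orders T S \<mu>. \<rho> c * (if t \<in> set c then \<mu> t else 0))"
    using dual_optimal_tight_cone[OF assms] unfolding nonneg_combination_on_def by blast
  have "dual_feasible T S \<mu>" using assms(2) unfolding dual_optimal_def by simp
  then have "primal_optimal T S
      (\<lambda>c t. if c \<in> tight_orders T S \<mu> \<and> t \<in> set c then \<rho> c * \<mu> t else 0)"
    using primal_optimal_from_tight_cone[OF assms(1) _ \<rho>_nonneg cover] by blast
  then show ?thesis unfolding tight_orders_def by (intro exI) auto
qed

end
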